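(* For $n\in\mathbb{N}$ let $\sigma^{(n)}$ be the distribution on $[n]$ with $\sigma^{(n)}_{\le i}=1-(1-\frac in)^2$, and consider the exponential-jump process with choice distribution $\sigma^{(n)}$ in its stationary regime, i.e. with gap vector $(d_1,\dots,d_{n-1})$ distributed according to $\bigotimes_{i=1}^{n-1}\mathrm{Exp}(n\sigma^{(n)}_{\le i}-i)$. Define $g_n(x)=\mathbb{E}\big[t_{\lceil xn\rceil}-t_{\lceil n/2\rceil}\big]$ for $x\in(0,1)$. Then for every $x\in(0,1)$, \[\lim_{n\to\infty}g_n(x)=\log\Big(\frac{x}{1-x}\Big).\]
   Context: The exponential-jump process with choice distribution $\sigma$ on $[n]$: the state consists of $n$ tokens at real positions $t_1<\dots<t_n$; in each step, independently sample $i^*\sim\sigma$ and $X\sim\mathrm{Exp}(1)$, move the $i^*$-th token from the left a distance $X$ to the right, and re-sort. The gaps are $d_i=t_{i+1}-t_i$, so $t_j-t_k=\sum_{i=k}^{j-1}d_i$ for $k\le j$ (and the negative of the corresponding sum for $k>j$). $\mathrm{Exp}(\lambda)$ is the exponential distribution with rate $\lambda$ (mean $1/\lambda$); $\bigotimes$ denotes a product of independent distributions; the product distribution above is the stationary distribution of the gap vector. $\log$ is the natural logarithm. *)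

theory Defs
  imports "HOL-Probability.Probability"
begin

definition sigma_le :: "nat \<Rightarrow> nat \<Rightarrow> real" where
  "sigma_le n i = 1 - (1 - real i / real n) ^ 2"

definition gap_rate :: "nat \<Rightarrow> nat \<Rightarrow> real" where
  "gap_rate n i = real n * sigma_le n i - real i"

definition gap_measure :: "nat \<Rightarrow> (nat \<Rightarrow> real) measure" where
  "gap_measure n = PiM {1..<n} (\<lambda>i. density lborel (exponential_density (gap_rate n i)))"

text \<open>t_j - t_k expressed through the gaps d_i = t_{i+1} - t_i.\<close>
definition tdiff :: "(nat \<Rightarrow> real) \<Rightarrow> nat \<Rightarrow> nat \<Rightarrow> real" where
  "tdiff d j k = (if k \<le> j then (\<Sum>i\<in>{k..<j}. d i) else - (\<Sum>i\<in>{j..<k}. d i))"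

definition g :: "nat \<Rightarrow> real \<Rightarrow> real" where
  "g n x = (\<integral>d. tdiff d (nat \<lceil>x * real n\<rceil>) (nat \<lceil>real n / 2\<rceil>) \<partial>gap_measure n)"

end

theory Submission
  imports Defs
begin

text \<open>
  The i-th gap has rate i(n - i)/n, so its mean splits into partial fractions
  1/i + 1/(n - i). Hence E[t_j - t_k] telescopes to a difference of the values
  H_{m-1} - H_{n-m} at m = j and m = k, H being the harmonic numbers. Since
  H_m = ln m + \<gamma> + o(1), the value at m = \<lceil>yn\<rceil> tends to ln (y/(1 - y)), and the
  reference point y = 1/2 contributes ln 1 = 0.
\<close>

lemma has_bochner_integral_exponential_mean:
  assumes "0 < (l::real)"
  shows "has_bochner_integral (density lborel (exponential_density l)) (\<lambda>x. x) (1 / l)"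
proof -
  interpret prob_space "density lborel (exponential_density l)"
    using prob_space_exponential_density[OF assms] .
  have "distributed (density lborel (exponential_density l)) lborel (\<lambda>x. x) (erlang_density 0 l)"
    unfolding distributed_def by (auto simp: distr_id2 intro: measurable_ident_sets)
  from has_bochner_integral_erlang_ith_moment[OF assms this, of 1] show ?thesis
    by simp
qed

lemma has_bochner_integral_PiM_component:
  assumes M: "\<And>i. i \<in> I \<Longrightarrow> prob_space (M i)" and i: "i \<in> I"
    and mean: "has_bochner_integral (M i) (\<lambda>x. x) (c::real)"
  shows "has_bochner_integral (PiM I M) (\<lambda>\<omega>. \<omega> i) c"
proof -
  have meas: "(\<lambda>\<omega>. \<omega> i) \<in> measurable (PiM I M) (M i)"
    using i by measurable
  have distr: "distr (PiM I M) (M i) (\<lambda>\<omega>. \<omega> i) = M i"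
    by (rule distr_PiM_component[OF M i])
  have "integrable (M i) (\<lambda>x. x)" "integral\<^sup>L (M i) (\<lambda>x. x) = c"
    using mean by (simp_all add: has_bochner_integral_iff)
  then show ?thesis
    using integrable_distr_eq[OF meas, of "\<lambda>x. x"] integral_distr[OF meas, of "\<lambda>x. x"]
    by (auto simp: has_bochner_integral_iff distr)
qed

lemma gap_rate_eq:
  assumes "0 < n"
  shows "gap_rate n i = real i * (real n - real i) / real n"
  using assms unfolding gap_rate_def sigma_le_def
  by (simp add: field_simps power2_eq_square)

lemma gap_rate_pos:
  assumes "1 \<le> i" "i < n"
  shows "0 < gap_rate n i"
  using assms by (simp add: gap_rate_eq)

lemma inverse_gap_rate_partial_fractions:
  assumes "1 \<le> i" "i < n"
  shows "1 / gap_rate n i = 1 / real i + 1 / real (n - i)"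
  using assms by (simp add: gap_rate_eq of_nat_diff field_simps)

text \<open>Up to an additive constant independent of m, this is E[t_m].\<close>
definition mean_position :: "nat \<Rightarrow> nat \<Rightarrow> real" where
  "mean_position n m = harm (m - 1) - harm (n - m)"

lemma mean_position_Suc:
  assumes "1 \<le> m" "m < n"
  shows "mean_position n (Suc m) = mean_position n m + 1 / gap_rate n m"
proof -
  obtain m' where m': "m = Suc m'" using assms by (cases m) auto
  obtain k where k: "n - m = Suc k" using assms by (cases "n - m") auto
  then have "n - Suc m = k" by simp
  then show ?thesis
    using inverse_gap_rate_partial_fractions[OF assms] m' k
    by (simp add: mean_position_def harm_Suc inverse_eq_divide)
qed

lemma sum_inverse_gap_rate:
  assumes "1 \<le> a" "a \<le> b" "b \<le> n"
  shows "(\<Sum>i\<in>{a..<b}. 1 / gap_rate n i) = mean_position n b - mean_position n a"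
  using assms(2,3)
proof (induction b rule: dec_induct)
  case base
  then show ?case by simp
next
  case (step b)
  then show ?case using assms(1) by (simp add: mean_position_Suc)
qed

lemma has_bochner_integral_sum_gaps:
  assumes "S \<subseteq> {1..<n}"
  shows "has_bochner_integral (gap_measure n) (\<lambda>d. \<Sum>i\<in>S. d i) (\<Sum>i\<in>S. 1 / gap_rate n i)"
proof -
  have "has_bochner_integral (gap_measure n) (\<lambda>d. d i) (1 / gap_rate n i)"
    if "i \<in> S" for i
    unfolding gap_measure_def
  proof (rule has_bochner_integral_PiM_component)
    show "prob_space (density lborel (exponential_density (gap_rate n j)))"
      if "j \<in> {1..<n}" for j
      using that by (intro prob_space_exponential_density gap_rate_pos) auto
    show "has_bochner_integral (density lborel (exponential_density (gap_rate n i))) (\<lambda>x. x)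
        (1 / gap_rate n i)"
      using \<open>i \<in> S\<close> assms by (intro has_bochner_integral_exponential_mean gap_rate_pos) auto
  qed (use \<open>i \<in> S\<close> assms in auto)
  then show ?thesis
    by (rule has_bochner_integral_sum[where f="\<lambda>i d. d i" and x="\<lambda>i. 1 / gap_rate n i"])
qed

lemma has_bochner_integral_tdiff:
  assumes "1 \<le> j" "j \<le> n" "1 \<le> k" "k \<le> n"
  shows "has_bochner_integral (gap_measure n) (\<lambda>d. tdiff d j k)
    (mean_position n j - mean_position n k)"
proof (cases "k \<le> j")
  case True
  then show ?thesis
    using has_bochner_integral_sum_gaps[of "{k..<j}" n] sum_inverse_gap_rate[of k j n] assms
    by (auto simp: tdiff_def)
next
  case False
  then show ?thesis
    using has_bochner_integral_minus[OF has_bochner_integral_sum_gaps[of "{j..<k}" n]]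
      sum_inverse_gap_rate[of j k n] assms
    by (auto simp: tdiff_def)
qed

lemma nat_ceiling_mult_bounds:
  assumes "0 < y" "y \<le> 1" "1 \<le> n"
  shows "1 \<le> nat \<lceil>y * real n\<rceil>" "nat \<lceil>y * real n\<rceil> \<le> n"
proof -
  have "0 < y * real n" using assms by simp
  then show "1 \<le> nat \<lceil>y * real n\<rceil>" by linarith
  have "y * real n \<le> real n" using assms by (intro mult_left_le_one_le) auto
  then show "nat \<lceil>y * real n\<rceil> \<le> n" by simp
qed

lemma g_eq_mean_position:
  assumes "0 < x" "x \<le> 1" "1 \<le> n"
  shows "g n x = mean_position n (nat \<lceil>x * real n\<rceil>) - mean_position n (nat \<lceil>real n / 2\<rceil>)"
proof -
  have "real n / 2 = 1 / 2 * real n" by simp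
  then show ?thesis
    unfolding g_def
    using assms nat_ceiling_mult_bounds[of x n] nat_ceiling_mult_bounds[of "1/2" n]
    by (intro has_bochner_integral_integral_eq has_bochner_integral_tdiff) auto
qed

lemma nat_ceiling_mult_div_tendsto:
  assumes "0 \<le> y"
  shows "(\<lambda>n. real (nat \<lceil>y * real n\<rceil>) / real n) \<longlonglongrightarrow> y"
proof (rule tendsto_sandwich[of "\<lambda>n. y" _ _ "\<lambda>n. y + 1 / real n"])
  have ceiling: "y * real n \<le> real (nat \<lceil>y * real n\<rceil>)" "real (nat \<lceil>y * real n\<rceil>) \<le> y * real n + 1"
    for n
  proof -
    have "real (nat \<lceil>y * real n\<rceil>) = of_int \<lceil>y * real n\<rceil>"
      using assms by simp
    then show "y * real n \<le> real (nat \<lceil>y * real n\<rceil>)" "real (nat \<lceil>y * real n\<rceil>) \<le> y * real n + 1"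
      by linarith+
  qed
  show "\<forall>\<^sub>F n in sequentially. y \<le> real (nat \<lceil>y * real n\<rceil>) / real n"
    using eventually_ge_at_top[of "1::nat"]
    by eventually_elim (use ceiling in \<open>auto simp: field_simps\<close>)
  show "\<forall>\<^sub>F n in sequentially. real (nat \<lceil>y * real n\<rceil>) / real n \<le> y + 1 / real n"
    using eventually_ge_at_top[of "1::nat"]
    by eventually_elim (use ceiling in \<open>auto simp: field_simps\<close>)
  show "(\<lambda>n. y + 1 / real n) \<longlonglongrightarrow> y"
    using tendsto_add[OF tendsto_const[of y] lim_1_over_n] by simp
qed simp

lemma filterlim_at_top_of_ratio_tendsto_pos:
  fixes a :: "nat \<Rightarrow> nat"
  assumes "(\<lambda>n. real (a n) / real n) \<longlonglongrightarrow> c" "0 < c"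
  shows "filterlim a at_top sequentially"
proof -
  have "filterlim (\<lambda>n. real (a n) / real n * real n) at_top sequentially"
    by (rule filterlim_tendsto_pos_mult_at_top[OF assms filterlim_real_sequentially])
  moreover have "\<forall>\<^sub>F n in sequentially. real (a n) / real n * real n = real (a n)"
    using eventually_ge_at_top[of "1::nat"] by eventually_elim simp
  ultimately have "filterlim (\<lambda>n. real (a n)) at_top sequentially"
    using filterlim_cong by fastforce
  then show ?thesis
    unfolding filterlim_at_top
  proof (intro allI)
    fix Z :: nat
    assume "\<forall>Z. \<forall>\<^sub>F n in sequentially. Z \<le> real (a n)"
    then show "\<forall>\<^sub>F n in sequentially. Z \<le> a n"
      by (rule allE[of _ "real Z"]) (auto elim: eventually_mono)
  qed
qed

lemma harm_diff_tendsto_ln_ratio: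
  fixes a b :: "nat \<Rightarrow> nat"
  assumes a: "(\<lambda>n. real (a n) / real n) \<longlonglongrightarrow> \<alpha>" and b: "(\<lambda>n. real (b n) / real n) \<longlonglongrightarrow> \<beta>"
    and "0 < \<alpha>" "0 < \<beta>"
  shows "(\<lambda>n. harm (a n) - harm (b n) :: real) \<longlonglongrightarrow> ln (\<alpha> / \<beta>)"
proof -
  have a_top: "filterlim a at_top sequentially" and b_top: "filterlim b at_top sequentially"
    using assms filterlim_at_top_of_ratio_tendsto_pos by blast+
  have "(\<lambda>n. (harm (a n) - ln (real (a n))) - (harm (b n) - ln (real (b n)))
      + (ln (real (a n) / real n) - ln (real (b n) / real n)))
      \<longlonglongrightarrow> euler_mascheroni - euler_mascheroni + (ln \<alpha> - ln \<beta>)"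
    using assms
    by (intro tendsto_add tendsto_diff tendsto_ln a b
        filterlim_compose[OF euler_mascheroni_LIMSEQ a_top]
        filterlim_compose[OF euler_mascheroni_LIMSEQ b_top]) auto
  moreover have "\<forall>\<^sub>F n in sequentially.
      (harm (a n) - ln (real (a n))) - (harm (b n) - ln (real (b n)))
      + (ln (real (a n) / real n) - ln (real (b n) / real n)) = harm (a n) - harm (b n)"
    using eventually_ge_at_top[of "1::nat"]
      filterlim_at_top[THEN iffD1, OF a_top, rule_format, of 1]
      filterlim_at_top[THEN iffD1, OF b_top, rule_format, of 1]
    by eventually_elim (simp add: ln_div)
  ultimately show ?thesis
    using assms by (simp add: Lim_transform_eventually ln_div)
qed

lemma mean_position_ceiling_tendsto:
  assumes "0 < y" "y < 1"
  shows "(\<lambda>n. mean_position n (nat \<lceil>y * real n\<rceil>)) \<longlonglongrightarrow> ln (y / (1 - y))"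
proof -
  define J where "J n = nat \<lceil>y * real n\<rceil>" for n
  have J: "(\<lambda>n. real (J n) / real n) \<longlonglongrightarrow> y"
    unfolding J_def using assms by (intro nat_ceiling_mult_div_tendsto) simp
  have "(\<lambda>n. real (J n) / real n - 1 / real n) \<longlonglongrightarrow> y - 0"
    by (intro tendsto_diff J lim_1_over_n)
  moreover have "\<forall>\<^sub>F n in sequentially. real (J n) / real n - 1 / real n = real (J n - 1) / real n"
    using eventually_ge_at_top[of "1::nat"]
    by eventually_elim
      (use assms nat_ceiling_mult_bounds in \<open>simp add: J_def of_nat_diff diff_divide_distrib\<close>)
  ultimately have left: "(\<lambda>n. real (J n - 1) / real n) \<longlonglongrightarrow> y"
    by (simp add: Lim_transform_eventually)
  have "(\<lambda>n. 1 - real (J n) / real n) \<longlonglongrightarrow> 1 - y"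
    by (intro tendsto_diff tendsto_const J)
  moreover have "\<forall>\<^sub>F n in sequentially. 1 - real (J n) / real n = real (n - J n) / real n"
    using eventually_ge_at_top[of "1::nat"]
    by eventually_elim
      (use assms nat_ceiling_mult_bounds in \<open>simp add: J_def of_nat_diff field_simps\<close>)
  ultimately have right: "(\<lambda>n. real (n - J n) / real n) \<longlonglongrightarrow> 1 - y"
    by (simp add: Lim_transform_eventually)
  show ?thesis
    using harm_diff_tendsto_ln_ratio[OF left right] assms
    by (simp add: mean_position_def J_def)
qed

theorem corollary13:
  fixes x :: real
  assumes "0 < x" and "x < 1"
  shows "(\<lambda>n. g n x) \<longlonglongrightarrow> ln (x / (1 - x))"
proof -
  have "(\<lambda>n. mean_position n (nat \<lceil>x * real n\<rceil>) - mean_position n (nat \<lceil>1 / 2 * real n\<rceil>))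
      \<longlonglongrightarrow> ln (x / (1 - x)) - ln ((1 / 2) / (1 - 1 / 2))"
    using assms by (intro tendsto_diff mean_position_ceiling_tendsto) auto
  moreover have "\<forall>\<^sub>F n in sequentially.
      mean_position n (nat \<lceil>x * real n\<rceil>) - mean_position n (nat \<lceil>1 / 2 * real n\<rceil>) = g n x"
    using eventually_ge_at_top[of "1::nat"]
    by eventually_elim (use assms g_eq_mean_position in simp)
  ultimately show ?thesis
    by (simp add: Lim_transform_eventually)
qed

end
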